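(* Let $G$ be a $k$-minor-critical graph. Then for every separation $(A,B)$ of $G$, the induced subgraph $G[A\cap B]$ is not a split graph; equivalently, $G[A\cap B]$ contains $C_4$, $C_5$ or $2K_2$ as an induced subgraph.
   Context: A graph $G$ is $k$-minor-critical if $\chi(G)=k$ and $\chi(H)<k$ for every minor $H$ of $G$ other than $G$ itself (a minor being obtained by edge deletions, edge contractions and vertex deletions). A separation of $G$ is a pair $(A,B)$ of subsets of $V(G)$ with $A\cup B=V(G)$, $A\setminus B\neq\emptyset$, $B\setminus A\neq\emptyset$, and no edge with one end in $A\setminus B$ and the other in $B\setminus A$. A split graph is a graph whose vertex set can be partitioned into a clique and an independent set (either possibly empty). *)

theory Defs
  imports Main
begin

type_synonym 'a graph = "'a set \<times> 'a set set"

definition verts :: "'a graph \<Rightarrow> 'a set" where "verts G = fst G"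
definition edges :: "'a graph \<Rightarrow> 'a set set" where "edges G = snd G"

definition finite_simple_graph :: "'a graph \<Rightarrow> bool" where
  "finite_simple_graph G \<longleftrightarrow> finite (verts G) \<and>
     (\<forall>e\<in>edges G. e \<subseteq> verts G \<and> card e = 2)"

definition colourable :: "'a graph \<Rightarrow> nat \<Rightarrow> bool" where
  "colourable G n \<longleftrightarrow> (\<exists>f :: 'a \<Rightarrow> nat.
      (\<forall>v\<in>verts G. f v < n) \<and> (\<forall>u v. {u, v} \<in> edges G \<longrightarrow> u \<noteq> v \<longrightarrow> f u \<noteq> f v))"

definition chromatic_number :: "'a graph \<Rightarrow> nat" where
  "chromatic_number G = (LEAST n. colourable G n)"

definition delete_edge :: "'a graph \<Rightarrow> 'a set \<Rightarrow> 'a graph" where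
  "delete_edge G e = (verts G, edges G - {e})"

definition delete_vertex :: "'a graph \<Rightarrow> 'a \<Rightarrow> 'a graph" where
  "delete_vertex G v = (verts G - {v}, {e \<in> edges G. v \<notin> e})"

definition contract_edge :: "'a graph \<Rightarrow> 'a \<Rightarrow> 'a \<Rightarrow> 'a graph" where
  "contract_edge G u v = (verts G - {v},
      {e \<in> edges G. v \<notin> e} \<union> {{u, w} | w. {v, w} \<in> edges G \<and> w \<noteq> u})"

definition minor_step :: "'a graph \<Rightarrow> 'a graph \<Rightarrow> bool" where
  "minor_step H G \<longleftrightarrow>
     (\<exists>e\<in>edges G. H = delete_edge G e) \<or>
     (\<exists>v\<in>verts G. H = delete_vertex G v) \<or>
     (\<exists>u v. {u, v} \<in> edges G \<and> u \<noteq> v \<and> H = contract_edge G u v)"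

text \<open>H is a proper minor of G: obtained by at least one minor operation.
  (For finite graphs every such H differs from G, and every minor of G other than G
  arises this way up to isomorphism.)\<close>

definition proper_minor :: "'a graph \<Rightarrow> 'a graph \<Rightarrow> bool" where
  "proper_minor H G \<longleftrightarrow> (\<lambda>X Y. minor_step Y X)\<^sup>+\<^sup>+ G H"

definition minor_critical :: "nat \<Rightarrow> 'a graph \<Rightarrow> bool" where
  "minor_critical k G \<longleftrightarrow> chromatic_number G = k \<and>
     (\<forall>H. proper_minor H G \<longrightarrow> chromatic_number H < k)"

definition separation :: "'a graph \<Rightarrow> 'a set \<Rightarrow> 'a set \<Rightarrow> bool" where
  "separation G A B \<longleftrightarrow> A \<union> B = verts G \<and> A - B \<noteq> {} \<and> B - A \<noteq> {} \<and>
     (\<forall>x y. x \<in> A - B \<longrightarrow> y \<in> B - A \<longrightarrow> {x, y} \<notin> edges G)"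

definition induced_subgraph :: "'a graph \<Rightarrow> 'a set \<Rightarrow> 'a graph" where
  "induced_subgraph G S = (S, {e \<in> edges G. e \<subseteq> S})"

definition split_graph :: "'a graph \<Rightarrow> bool" where
  "split_graph G \<longleftrightarrow> (\<exists>C I. C \<union> I = verts G \<and> C \<inter> I = {} \<and>
     (\<forall>u\<in>C. \<forall>v\<in>C. u \<noteq> v \<longrightarrow> {u, v} \<in> edges G) \<and>
     (\<forall>u\<in>I. \<forall>v\<in>I. {u, v} \<notin> edges G))"

end

theory Submission
  imports Defs
begin

text \<open>Suppose A \<inter> B splits into a clique C and an independent set I.  First shrink the
  separation so that every vertex of the separator S has neighbours in two connected
  pieces D and D' on opposite sides.  Contracting D' together with all but one vertex t of
  I \<inter> S into t gives a proper minor, hence a (k-1)-colouring; read back on G - D' it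
  colours all of I \<inter> S alike and differently from the clique C \<inter> S (if I \<inter> S is empty,
  deleting D' suffices).  Doing the same with D for G[D' \<union> S], both colourings induce the
  same partition of S, so after a permutation of colours they agree on S and combine to a
  (k-1)-colouring of G, contradicting \<chi>(G) = k.\<close>

section \<open>Connectivity inside a vertex set\<close>

definition adj_in :: "'a graph \<Rightarrow> 'a set \<Rightarrow> 'a \<Rightarrow> 'a \<Rightarrow> bool" where
  "adj_in G U a b \<longleftrightarrow> a \<in> U \<and> b \<in> U \<and> {a, b} \<in> edges G"

definition connected_set :: "'a graph \<Rightarrow> 'a set \<Rightarrow> bool" where
  "connected_set G U \<longleftrightarrow> (\<forall>x\<in>U. \<forall>y\<in>U. (adj_in G U)\<^sup>*\<^sup>* x y)"

definition component :: "'a graph \<Rightarrow> 'a set \<Rightarrow> 'a \<Rightarrow> 'a set" where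
  "component G U x = {z. (adj_in G U)\<^sup>*\<^sup>* x z}"

definition neighbourhood :: "'a graph \<Rightarrow> 'a set \<Rightarrow> 'a set" where
  "neighbourhood G D = {s. s \<notin> D \<and> (\<exists>x\<in>D. {x, s} \<in> edges G)}"

lemma symp_adj_in: "symp (adj_in G U)"
  unfolding adj_in_def by (rule sympI) (simp add: insert_commute)

lemma rtranclp_adj_in_sym: "(adj_in G U)\<^sup>*\<^sup>* a b \<Longrightarrow> (adj_in G U)\<^sup>*\<^sup>* b a"
  by (rule sympD[OF symp_rtranclp[OF symp_adj_in]])

lemma rtranclp_adj_in_mono:
  assumes "(adj_in G U)\<^sup>*\<^sup>* a b" "U \<subseteq> U'"
  shows "(adj_in G U')\<^sup>*\<^sup>* a b"
  by (rule rtranclp_mono[THEN predicate2D, OF _ assms(1)]) (use assms(2) in \<open>auto simp: adj_in_def\<close>)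

lemma mem_component_self: "x \<in> component G U x"
  by (simp add: component_def)

lemma component_subset: "x \<in> U \<Longrightarrow> component G U x \<subseteq> U"
proof
  fix z assume "x \<in> U" "z \<in> component G U x"
  then have "(adj_in G U)\<^sup>*\<^sup>* x z" "x \<in> U" by (simp_all add: component_def)
  then show "z \<in> U" by (induction rule: rtranclp_induct) (auto simp: adj_in_def)
qed

lemma component_closed:
  assumes "x \<in> U" "y \<in> component G U x" "z \<in> U" "{y, z} \<in> edges G"
  shows "z \<in> component G U x"
proof -
  have "y \<in> U" using assms(1,2) component_subset by fast
  with assms(3,4) have "adj_in G U y z" by (simp add: adj_in_def)
  with assms(2) show ?thesis
    unfolding component_def by (simp add: rtranclp.rtrancl_into_rtrancl)
qed

lemma neighbourhood_component_disjoint: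
  assumes "x \<in> U"
  shows "neighbourhood G (component G U x) \<inter> U = {}"
proof -
  have "s \<notin> U" if "s \<in> neighbourhood G (component G U x)" for s
    using that component_closed[OF assms] unfolding neighbourhood_def by blast
  then show ?thesis by blast
qed

lemma connected_set_component: "connected_set G (component G U x)"
proof -
  have walk: "(adj_in G (component G U x))\<^sup>*\<^sup>* x z" if "(adj_in G U)\<^sup>*\<^sup>* x z" for z
    using that
  proof (induction rule: rtranclp_induct)
    case (step y z)
    then have "adj_in G (component G U x) y z"
      by (auto simp: adj_in_def component_def intro: rtranclp.rtrancl_into_rtrancl)
    with step show ?case by (auto intro: rtranclp.rtrancl_into_rtrancl)
  qed simp
  show ?thesis unfolding connected_set_def
  proof (intro ballI)
    fix y z assume "y \<in> component G U x" "z \<in> component G U x"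
    then have "(adj_in G U)\<^sup>*\<^sup>* x y" "(adj_in G U)\<^sup>*\<^sup>* x z" by (simp_all add: component_def)
    then have "(adj_in G (component G U x))\<^sup>*\<^sup>* y x" "(adj_in G (component G U x))\<^sup>*\<^sup>* x z"
      by (simp_all add: walk rtranclp_adj_in_sym)
    then show "(adj_in G (component G U x))\<^sup>*\<^sup>* y z" by (rule rtranclp_trans)
  qed
qed

lemma neighbourhood_component_outside_neighbourhood:
  assumes eV: "\<forall>e\<in>edges G. e \<subseteq> verts G"
    and x: "x \<in> verts G - D - neighbourhood G D"
  shows "neighbourhood G (component G (verts G - D - neighbourhood G D) x) \<subseteq> neighbourhood G D"
proof
  let ?U = "verts G - D - neighbourhood G D"
  fix s assume s: "s \<in> neighbourhood G (component G ?U x)"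
  then obtain y where y: "y \<in> component G ?U x" "{y, s} \<in> edges G"
    unfolding neighbourhood_def by blast
  have "y \<in> ?U" using y(1) component_subset[OF x] by blast
  have "s \<notin> ?U" using s neighbourhood_component_disjoint[OF x] by blast
  moreover have "s \<notin> D"
  proof
    assume "s \<in> D"
    with y(2) \<open>y \<in> ?U\<close> have "y \<in> neighbourhood G D"
      unfolding neighbourhood_def by (auto simp: insert_commute)
    with \<open>y \<in> ?U\<close> show False by blast
  qed
  ultimately show "s \<in> neighbourhood G D" using y(2) eV by blast
qed

section \<open>Minors by deletion and contraction\<close>

abbreviation reduces_to :: "'a graph \<Rightarrow> 'a graph \<Rightarrow> bool" where
  "reduces_to G H \<equiv> (\<lambda>X Y. minor_step Y X)\<^sup>*\<^sup>* G H"

lemma proper_minorI: "reduces_to G H \<Longrightarrow> H \<noteq> G \<Longrightarrow> proper_minor H G"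
  unfolding proper_minor_def by (auto dest: rtranclpD)

definition delete_vertices :: "'a graph \<Rightarrow> 'a set \<Rightarrow> 'a graph" where
  "delete_vertices G Z = (verts G - Z, {e \<in> edges G. e \<inter> Z = {}})"

lemma reduces_to_delete_vertices:
  assumes "finite Z" "Z \<subseteq> verts G"
  shows "reduces_to G (delete_vertices G Z)"
  using assms
proof (induction Z rule: finite_induct)
  case empty
  have "delete_vertices G {} = G" by (simp add: delete_vertices_def verts_def edges_def)
  then show ?case by simp
next
  case (insert x Z)
  have "delete_vertices G (insert x Z) = delete_vertex (delete_vertices G Z) x"
    by (auto simp: delete_vertices_def delete_vertex_def verts_def edges_def)
  moreover have "x \<in> verts (delete_vertices G Z)"
    using insert by (simp add: delete_vertices_def verts_def)
  ultimately have "minor_step (delete_vertices G (insert x Z)) (delete_vertices G Z)"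
    unfolding minor_step_def by blast
  with insert show ?case by (simp add: rtranclp.rtrancl_into_rtrancl)
qed

definition contract_set :: "'a graph \<Rightarrow> 'a \<Rightarrow> 'a set \<Rightarrow> 'a graph" where
  "contract_set G t R = (verts G - R, {e \<in> edges G. e \<inter> R = {}} \<union>
      {{t, w} | w. w \<notin> R \<and> w \<noteq> t \<and> (\<exists>x\<in>R. {x, w} \<in> edges G)})"

lemma contract_set_insert:
  assumes "\<forall>x. {x} \<notin> edges G" "v \<notin> R" "v \<noteq> t" "t \<notin> R"
  shows "contract_set G t (insert v R) = contract_edge (contract_set G t R) t v"
proof -
  have "edges (contract_set G t (insert v R)) = edges (contract_edge (contract_set G t R) t v)"
  proof (rule set_eqI, rule iffI)
    fix e assume "e \<in> edges (contract_set G t (insert v R))"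
    then show "e \<in> edges (contract_edge (contract_set G t R) t v)"
      using assms by (auto simp: contract_set_def contract_edge_def edges_def verts_def)
  next
    fix e assume "e \<in> edges (contract_edge (contract_set G t R) t v)"
    then show "e \<in> edges (contract_set G t (insert v R))"
      using assms
      by (auto simp: contract_set_def contract_edge_def edges_def verts_def doubleton_eq_iff)
  qed
  moreover have "verts (contract_set G t (insert v R)) = verts (contract_edge (contract_set G t R) t v)"
    by (auto simp: contract_set_def contract_edge_def verts_def)
  ultimately show ?thesis by (metis prod.collapse verts_def edges_def)
qed

inductive contractible :: "'a graph \<Rightarrow> 'a \<Rightarrow> 'a set \<Rightarrow> bool" for G t where
  contractible_empty: "contractible G t {}"
| contractible_insert: "contractible G t R \<Longrightarrow> v \<notin> R \<Longrightarrow> v \<noteq> t \<Longrightarrow>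
     {t, v} \<in> edges G \<or> (\<exists>x\<in>R. {x, v} \<in> edges G) \<Longrightarrow> contractible G t (insert v R)"

lemma contractible_not_mem: "contractible G t R \<Longrightarrow> t \<notin> R"
  by (induction rule: contractible.induct) auto

lemma reduces_to_contract_set:
  assumes "contractible G t R" and no_loops: "\<forall>x. {x} \<notin> edges G"
  shows "reduces_to G (contract_set G t R)"
  using assms(1)
proof (induction rule: contractible.induct)
  case contractible_empty
  have "contract_set G t {} = G" by (simp add: contract_set_def verts_def edges_def)
  then show ?case by simp
next
  case (contractible_insert R v)
  have "t \<notin> R" using contractible_insert(1) by (rule contractible_not_mem)
  then have "{t, v} \<in> edges (contract_set G t R)"
    using contractible_insert by (auto simp: contract_set_def edges_def)
  moreover have "contract_set G t (insert v R) = contract_edge (contract_set G t R) t v"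
    using contract_set_insert[OF no_loops] contractible_insert \<open>t \<notin> R\<close> by blast
  ultimately have "minor_step (contract_set G t (insert v R)) (contract_set G t R)"
    unfolding minor_step_def using contractible_insert(3) by blast
  with contractible_insert show ?case by (meson rtranclp.rtrancl_into_rtrancl)
qed

text \<open>A maximal contractible subset of R is closed under adjacency within
  insert t R, hence by connectivity it is all of R.\<close>

lemma contractible_if_reachable:
  assumes fin: "finite R" and "t \<notin> R"
    and reach: "\<forall>x\<in>R. (adj_in G (insert t R))\<^sup>*\<^sup>* t x"
  shows "contractible G t R"
proof -
  define F where "F = {R'. R' \<subseteq> R \<and> contractible G t R'}"
  have "finite F" unfolding F_def using fin by simp
  moreover have "{} \<in> F" unfolding F_def by (simp add: contractible_empty)
  ultimately have "Max (card ` F) \<in> card ` F" by (intro Max_in) auto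
  then obtain R0 where "R0 \<in> F" "card R0 = Max (card ` F)" by auto
  with \<open>finite F\<close> have "R0 \<in> F" and R0_max: "\<And>R'. R' \<in> F \<Longrightarrow> card R' \<le> card R0" by simp_all
  then have R0: "R0 \<subseteq> R" "contractible G t R0" unfolding F_def by auto
  have closed: "x \<in> insert t R0" if "(adj_in G (insert t R))\<^sup>*\<^sup>* t x" for x
    using that
  proof (induction rule: rtranclp_induct)
    case (step y z)
    show ?case
    proof (rule ccontr)
      assume z: "z \<notin> insert t R0"
      have "z \<in> R" "{y, z} \<in> edges G" "y \<in> insert t R0"
        using step z by (auto simp: adj_in_def)
      then have "insert z R0 \<in> F"
        unfolding F_def using R0 z by (auto intro: contractible_insert)
      then have "card (insert z R0) \<le> card R0" by (rule R0_max)
      moreover have "finite R0" using R0 fin finite_subset by blast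
      ultimately show False using z by simp
    qed
  qed simp
  have "R = R0" using closed reach R0(1) \<open>t \<notin> R\<close> by blast
  with R0 show ?thesis by simp
qed

lemma contractible_attached_connected:
  assumes "finite (D \<union> X)" "t \<notin> D \<union> X" "connected_set G D"
    and t_attached: "\<exists>d\<in>D. {d, t} \<in> edges G"
    and X_attached: "\<forall>x\<in>X. \<exists>d\<in>D. {d, x} \<in> edges G"
  shows "contractible G t (D \<union> X)"
proof -
  let ?U = "insert t (D \<union> X)"
  obtain d0 where d0: "d0 \<in> D" "{d0, t} \<in> edges G" using t_attached by blast
  have reach_D: "(adj_in G ?U)\<^sup>*\<^sup>* t x" if "x \<in> D" for x
  proof -
    have "(adj_in G D)\<^sup>*\<^sup>* d0 x" using assms(3) d0 that unfolding connected_set_def by blast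
    then have "(adj_in G ?U)\<^sup>*\<^sup>* d0 x" by (rule rtranclp_adj_in_mono) blast
    moreover have "adj_in G ?U t d0" using d0 by (simp add: adj_in_def insert_commute)
    ultimately show ?thesis by (rule converse_rtranclp_into_rtranclp[rotated])
  qed
  have "(adj_in G ?U)\<^sup>*\<^sup>* t x" if "x \<in> D \<union> X" for x
  proof (cases "x \<in> D")
    case True
    then show ?thesis by (rule reach_D)
  next
    case False
    with that have "x \<in> X" by simp
    with X_attached obtain d where d: "d \<in> D" "{d, x} \<in> edges G" by blast
    then have "adj_in G ?U d x" using that by (simp add: adj_in_def)
    with reach_D[OF d(1)] show ?thesis by (rule rtranclp.rtrancl_into_rtrancl)
  qed
  then show ?thesis using assms(1,2) by (intro contractible_if_reachable) simp_all
qed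

section \<open>Colourings of proper minors\<close>

definition colouring_on :: "'a graph \<Rightarrow> 'a set \<Rightarrow> nat \<Rightarrow> ('a \<Rightarrow> nat) \<Rightarrow> bool" where
  "colouring_on G W m g \<longleftrightarrow> (\<forall>v\<in>W. g v < m) \<and>
     (\<forall>u v. {u, v} \<in> edges G \<longrightarrow> u \<in> W \<longrightarrow> v \<in> W \<longrightarrow> u \<noteq> v \<longrightarrow> g u \<noteq> g v)"

lemma colourable_mono: "colourable H n \<Longrightarrow> n \<le> m \<Longrightarrow> colourable H m"
  unfolding colourable_def by (meson less_le_trans)

lemma colourable_card:
  assumes "finite U" "verts H \<subseteq> U" "\<forall>e\<in>edges H. e \<subseteq> U"
  shows "colourable H (card U)"
proof -
  obtain f :: "'a \<Rightarrow> nat" where f: "bij_betw f U {..<card U}"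
    using assms(1) ex_bij_betw_finite_nat by (metis atLeast0LessThan)
  show ?thesis unfolding colourable_def
  proof (intro exI[of _ f] conjI allI impI ballI)
    fix v assume "v \<in> verts H" then show "f v < card U" using f assms(2) by (auto simp: bij_betw_def)
  next
    fix u v assume "{u, v} \<in> edges H" "u \<noteq> v"
    then have "u \<in> U" "v \<in> U" using assms(3) by auto
    with \<open>u \<noteq> v\<close> show "f u \<noteq> f v" using f by (auto simp: bij_betw_def dest: inj_onD)
  qed
qed

lemma chromatic_number_le: "colourable G n \<Longrightarrow> chromatic_number G \<le> n"
  unfolding chromatic_number_def by (rule Least_le)

lemma not_colourable_zero: "verts G \<noteq> {} \<Longrightarrow> \<not> colourable G 0"
  unfolding colourable_def by blast

lemma colourable_proper_minor_of_critical:
  assumes fsg: "finite_simple_graph G"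
    and crit: "\<forall>H. proper_minor H G \<longrightarrow> chromatic_number H < k"
    and "proper_minor H G" "verts H \<subseteq> verts G" "\<forall>e\<in>edges H. e \<subseteq> verts G"
  shows "colourable H (k - 1)"
proof -
  have "colourable H (card (verts G))"
    using assms fsg by (intro colourable_card) (auto simp: finite_simple_graph_def)
  then have "colourable H (chromatic_number H)"
    unfolding chromatic_number_def by (rule LeastI)
  moreover have "chromatic_number H \<le> k - 1" using crit assms(3) by fastforce
  ultimately show ?thesis by (rule colourable_mono)
qed

lemma colouring_on_by_deletion:
  assumes fsg: "finite_simple_graph G"
    and crit: "\<forall>H. proper_minor H G \<longrightarrow> chromatic_number H < k"
    and Z: "Z \<noteq> {}" "Z \<subseteq> verts G" and W: "W \<subseteq> verts G" "W \<inter> Z = {}"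
  shows "\<exists>g. colouring_on G W (k - 1) g"
proof -
  let ?H = "delete_vertices G Z"
  have "finite Z" using Z fsg finite_subset by (auto simp: finite_simple_graph_def)
  then have "reduces_to G ?H" using Z(2) by (rule reduces_to_delete_vertices)
  moreover have "verts ?H \<noteq> verts G" using Z by (auto simp: delete_vertices_def verts_def)
  then have "?H \<noteq> G" by auto
  ultimately have "proper_minor ?H G" by (rule proper_minorI)
  then have "colourable ?H (k - 1)"
    using fsg by (intro colourable_proper_minor_of_critical[OF fsg crit])
      (auto simp: delete_vertices_def verts_def edges_def finite_simple_graph_def)
  then obtain f where f: "\<forall>v\<in>verts ?H. f v < k - 1"
    "\<forall>u v. {u, v} \<in> edges ?H \<longrightarrow> u \<noteq> v \<longrightarrow> f u \<noteq> f v"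
    unfolding colourable_def by blast
  have "colouring_on G W (k - 1) f"
    unfolding colouring_on_def
  proof (intro conjI ballI allI impI)
    fix v assume "v \<in> W" then show "f v < k - 1"
      using f(1) W by (auto simp: delete_vertices_def verts_def)
  next
    fix u v assume "{u, v} \<in> edges G" "u \<in> W" "v \<in> W" "u \<noteq> v"
    then have "{u, v} \<in> edges ?H" using W by (auto simp: delete_vertices_def edges_def)
    with f(2) \<open>u \<noteq> v\<close> show "f u \<noteq> f v" by blast
  qed
  then show ?thesis by blast
qed

lemma colourable_contraction_of_critical:
  assumes fsg: "finite_simple_graph G"
    and crit: "\<forall>H. proper_minor H G \<longrightarrow> chromatic_number H < k"
    and "contractible G t R" "R \<noteq> {}" "R \<subseteq> verts G" "t \<in> verts G"
  shows "colourable (contract_set G t R) (k - 1)"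
proof -
  let ?H = "contract_set G t R"
  have "\<forall>x. {x} \<notin> edges G" using fsg unfolding finite_simple_graph_def by fastforce
  with \<open>contractible G t R\<close> have "reduces_to G ?H" by (rule reduces_to_contract_set)
  moreover have "verts ?H \<noteq> verts G" using assms(4,5) by (auto simp: contract_set_def verts_def)
  then have "?H \<noteq> G" by auto
  ultimately have "proper_minor ?H G" by (rule proper_minorI)
  then show ?thesis
    using fsg assms(6) by (intro colourable_proper_minor_of_critical[OF fsg crit])
      (auto simp: contract_set_def verts_def edges_def finite_simple_graph_def)
qed

lemma contract_set_colouring_lift:
  assumes f: "\<forall>u v. {u, v} \<in> edges (contract_set G t R) \<longrightarrow> u \<noteq> v \<longrightarrow> f u \<noteq> f v"
    and "{u, v} \<in> edges G" "u \<noteq> v" "v \<notin> insert t R"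
  shows "f (if u \<in> R then t else u) \<noteq> f v"
proof (cases "u \<in> R")
  case True
  then have "{t, v} \<in> edges (contract_set G t R)"
    using assms by (auto simp: contract_set_def edges_def)
  then show ?thesis using f True assms by auto
next
  case False
  then have "{u, v} \<in> edges (contract_set G t R)"
    using assms by (auto simp: contract_set_def edges_def)
  then show ?thesis using f False assms by auto
qed

lemma colouring_on_through_contraction:
  assumes f: "\<forall>v\<in>verts (contract_set G t R). f v < m"
      "\<forall>u v. {u, v} \<in> edges (contract_set G t R) \<longrightarrow> u \<noteq> v \<longrightarrow> f u \<noteq> f v"
    and "t \<in> verts G" "t \<notin> R" "W \<subseteq> verts G"
    and indep: "\<forall>u\<in>W \<inter> insert t R. \<forall>v\<in>W \<inter> insert t R. {u, v} \<notin> edges G"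
  shows "colouring_on G W m (\<lambda>v. f (if v \<in> R then t else v))"
  unfolding colouring_on_def
proof (intro conjI ballI allI impI)
  fix v assume "v \<in> W" then show "f (if v \<in> R then t else v) < m"
    using f(1) assms(3-5) by (auto simp: contract_set_def verts_def)
next
  fix u v assume uv: "{u, v} \<in> edges G" "u \<in> W" "v \<in> W" "u \<noteq> v"
  show "f (if u \<in> R then t else u) \<noteq> f (if v \<in> R then t else v)"
  proof (cases "v \<in> insert t R")
    case False
    with contract_set_colouring_lift[OF f(2) uv(1,4) this] show ?thesis by simp
  next
    case True
    with indep uv have u: "u \<notin> insert t R" by blast
    from uv(1) have "{v, u} \<in> edges G" by (simp add: insert_commute)
    from contract_set_colouring_lift[OF f(2) this uv(4)[symmetric] u] u show ?thesis by simp
  qed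
qed

section \<open>Colourings that respect a split separator\<close>

definition colours_split :: "'a set \<Rightarrow> 'a set \<Rightarrow> ('a \<Rightarrow> nat) \<Rightarrow> bool" where
  "colours_split C I g \<longleftrightarrow> (\<forall>i\<in>I. \<forall>j\<in>I. g i = g j) \<and> (\<forall>i\<in>I. \<forall>c\<in>C. g i \<noteq> g c)"

text \<open>Contracting D together with all of I except t into t makes t adjacent to every
  vertex of C, so the colour of t can be given to all of I.\<close>

lemma split_colouring_by_contraction:
  assumes fsg: "finite_simple_graph G"
    and crit: "\<forall>H. proper_minor H G \<longrightarrow> chromatic_number H < k"
    and D: "D \<subseteq> verts G" "D \<noteq> {}" "connected_set G D"
    and CI: "C \<inter> I = {}" "t \<in> I" and indep: "\<forall>u\<in>I. \<forall>v\<in>I. {u, v} \<notin> edges G"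
    and attached: "\<forall>s\<in>C \<union> I. \<exists>x\<in>D. {x, s} \<in> edges G"
    and W: "W \<subseteq> verts G" "W \<inter> D = {}" "C \<union> I \<subseteq> W"
  shows "\<exists>g. colouring_on G W (k - 1) g \<and> colours_split C I g"
proof -
  define R where "R = D \<union> (I - {t})"
  have tR: "t \<notin> R" and RV: "R \<subseteq> verts G" and tV: "t \<in> verts G"
    using CI D W unfolding R_def by auto
  have "finite R" using RV fsg finite_subset by (auto simp: finite_simple_graph_def)
  then have "contractible G t R"
    using tR D(3) attached CI(2) unfolding R_def by (intro contractible_attached_connected) auto
  then have "colourable (contract_set G t R) (k - 1)"
    using D(2) RV tV unfolding R_def by (intro colourable_contraction_of_critical[OF fsg crit]) auto
  then obtain f where f: "\<forall>v\<in>verts (contract_set G t R). f v < k - 1"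
    "\<forall>u v. {u, v} \<in> edges (contract_set G t R) \<longrightarrow> u \<noteq> v \<longrightarrow> f u \<noteq> f v"
    unfolding colourable_def by blast
  define g where "g v = f (if v \<in> R then t else v)" for v
  have "W \<inter> insert t R \<subseteq> I" using W CI unfolding R_def by blast
  with indep have "colouring_on G W (k - 1) g"
    unfolding g_def using W(1) by (intro colouring_on_through_contraction[OF f tV tR]) blast+
  moreover have "colours_split C I g"
    unfolding colours_split_def
  proof (intro conjI ballI)
    fix i j assume "i \<in> I" "j \<in> I" then show "g i = g j" using CI by (auto simp: g_def R_def)
  next
    fix i c assume ic: "i \<in> I" "c \<in> C"
    obtain x where x: "x \<in> D" "{x, c} \<in> edges G" using attached ic by blast
    have "c \<notin> insert t R" using ic CI W unfolding R_def by blast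
    moreover have "x \<noteq> c" using x W ic by blast
    ultimately have "f t \<noteq> f c"
      using contract_set_colouring_lift[OF f(2) x(2)] x(1) ic(2) CI(1) by (auto simp: R_def)
    then show "g i \<noteq> g c" using ic CI \<open>c \<notin> insert t R\<close> by (auto simp: g_def R_def)
  qed
  ultimately show ?thesis by blast
qed

lemma split_colouring_beside_connected:
  assumes fsg: "finite_simple_graph G"
    and crit: "\<forall>H. proper_minor H G \<longrightarrow> chromatic_number H < k"
    and D: "D \<subseteq> verts G" "D \<noteq> {}" "connected_set G D"
    and CI: "C \<inter> I = {}" and indep: "\<forall>u\<in>I. \<forall>v\<in>I. {u, v} \<notin> edges G"
    and attached: "\<forall>s\<in>C \<union> I. \<exists>x\<in>D. {x, s} \<in> edges G"
    and W: "W \<subseteq> verts G" "W \<inter> D = {}" "C \<union> I \<subseteq> W"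
  shows "\<exists>g. colouring_on G W (k - 1) g \<and> colours_split C I g"
proof (cases "I = {}")
  case True
  then show ?thesis
    using colouring_on_by_deletion[OF fsg crit D(2,1) W(1,2)] by (simp add: colours_split_def)
next
  case False
  then obtain t where "t \<in> I" by blast
  then show ?thesis by (rule split_colouring_by_contraction[OF fsg crit D CI _ indep attached W])
qed

lemma colours_split_same_colour_iff:
  assumes g: "colouring_on G W m g" and "C \<subseteq> W"
    and clique: "\<forall>u\<in>C. \<forall>v\<in>C. u \<noteq> v \<longrightarrow> {u, v} \<in> edges G"
    and split: "colours_split C I g" and "u \<in> C \<union> I" "v \<in> C \<union> I"
  shows "g u = g v \<longleftrightarrow> u = v \<or> (u \<in> I \<and> v \<in> I)"
proof (cases "u \<in> I \<or> v \<in> I")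
  case True
  show ?thesis
  proof (cases "u = v")
    case False
    with True assms(5,6) have "(u \<in> I \<and> v \<in> I) \<or> (u \<in> I \<and> v \<in> C) \<or> (v \<in> I \<and> u \<in> C)" by blast
    with split show ?thesis unfolding colours_split_def by fastforce
  qed simp
next
  case False
  then have "u \<in> C" "v \<in> C" using assms(5,6) by auto
  with clique False have "{u, v} \<in> edges G" if "u \<noteq> v" using that by blast
  with g \<open>C \<subseteq> W\<close> \<open>u \<in> C\<close> \<open>v \<in> C\<close> False show ?thesis unfolding colouring_on_def by blast
qed

text \<open>A bijection between the colours used on S, extended by any bijection between the
  unused ones.\<close>

lemma colour_permutation:
  fixes gP gQ :: "'a \<Rightarrow> nat"
  assumes same: "\<forall>u\<in>S. \<forall>v\<in>S. gP u = gP v \<longleftrightarrow> gQ u = gQ v"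
    and bounded: "\<forall>v\<in>S. gP v < m" "\<forall>v\<in>S. gQ v < m"
  obtains \<phi> where "inj_on \<phi> {..<m}" "\<forall>c<m. \<phi> c < m" "\<forall>v\<in>S. \<phi> (gQ v) = gP v"
proof -
  define A where "A = gQ ` S"
  define B where "B = gP ` S"
  define \<psi> where "\<psi> c = gP (SOME s. s \<in> S \<and> gQ s = c)" for c
  have \<psi>: "\<psi> (gQ s) = gP s" if "s \<in> S" for s
  proof -
    let ?s = "SOME s'. s' \<in> S \<and> gQ s' = gQ s"
    have "\<exists>s'. s' \<in> S \<and> gQ s' = gQ s" using that by blast
    then have "?s \<in> S" "gQ ?s = gQ s" by (metis (mono_tags, lifting) someI_ex)+
    then show ?thesis unfolding \<psi>_def using same[rule_format, OF _ that] by simp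
  qed
  have AB: "A \<subseteq> {..<m}" "B \<subseteq> {..<m}" using bounded unfolding A_def B_def by auto
  have "inj_on \<psi> A"
  proof
    fix a b assume "a \<in> A" "b \<in> A" "\<psi> a = \<psi> b"
    then obtain u v where "u \<in> S" "v \<in> S" "a = gQ u" "b = gQ v" unfolding A_def by blast
    with \<open>\<psi> a = \<psi> b\<close> show "a = b" using \<psi> same by simp
  qed
  moreover have \<psi>_A: "\<psi> ` A = B" unfolding A_def B_def using \<psi> by (auto simp: image_image)
  ultimately have "card A = card B" by (metis card_image)
  then have "card ({..<m} - A) = card ({..<m} - B)"
    using AB by (simp add: card_Diff_subset finite_subset)
  then obtain \<beta> where \<beta>: "bij_betw \<beta> ({..<m} - A) ({..<m} - B)"
    using finite_same_card_bij by blast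
  define \<phi> where "\<phi> c = (if c \<in> A then \<psi> c else \<beta> c)" for c
  have \<phi>_B: "\<phi> c \<in> B \<longleftrightarrow> c \<in> A" if "c < m" for c
    using that \<beta> \<psi>_A unfolding \<phi>_def bij_betw_def by auto
  have "inj_on \<phi> {..<m}"
  proof (rule inj_onI)
    fix x y assume xy: "x \<in> {..<m}" "y \<in> {..<m}" "\<phi> x = \<phi> y"
    then have "x \<in> A \<longleftrightarrow> y \<in> A" using \<phi>_B by (metis lessThan_iff)
    then show "x = y"
      using xy \<open>inj_on \<psi> A\<close> \<beta> unfolding \<phi>_def bij_betw_def by (auto dest: inj_onD)
  qed
  moreover have "\<forall>c<m. \<phi> c < m" using \<beta> \<psi>_A AB unfolding \<phi>_def bij_betw_def by auto
  moreover have "\<forall>v\<in>S. \<phi> (gQ v) = gP v" using \<psi> unfolding \<phi>_def A_def by simp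
  ultimately show ?thesis by (rule that)
qed

lemma colourable_glue:
  assumes gP: "colouring_on G P m gP" and gQ: "colouring_on G Q m gQ"
    and PQ: "P \<union> Q = verts G" and eV: "\<forall>e\<in>edges G. e \<subseteq> verts G"
    and sep: "\<forall>u v. u \<in> P - Q \<longrightarrow> v \<in> Q - P \<longrightarrow> {u, v} \<notin> edges G"
    and same: "\<forall>u\<in>P \<inter> Q. \<forall>v\<in>P \<inter> Q. gP u = gP v \<longleftrightarrow> gQ u = gQ v"
  shows "colourable G m"
proof -
  obtain \<phi> where \<phi>: "inj_on \<phi> {..<m}" "\<forall>c<m. \<phi> c < m" "\<forall>v\<in>P \<inter> Q. \<phi> (gQ v) = gP v"
  proof (rule colour_permutation[OF same])
    show "\<forall>v\<in>P \<inter> Q. gP v < m" "\<forall>v\<in>P \<inter> Q. gQ v < m"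
      using gP gQ unfolding colouring_on_def by auto
  qed
  define h where "h v = (if v \<in> P then gP v else \<phi> (gQ v))" for v
  have hQ: "h v = \<phi> (gQ v)" if "v \<in> Q" for v
    using that \<phi>(3) by (simp add: h_def)
  show ?thesis unfolding colourable_def
  proof (intro exI[of _ h] conjI allI impI ballI)
    fix v assume "v \<in> verts G"
    then show "h v < m" using gP gQ PQ \<phi>(2) unfolding h_def colouring_on_def by auto
  next
    fix u v assume uv: "{u, v} \<in> edges G" "u \<noteq> v"
    then have "u \<in> P \<union> Q" "v \<in> P \<union> Q" using eV PQ by auto
    then consider "u \<in> P" "v \<in> P" | "u \<in> Q" "v \<in> Q" | "u \<in> P - Q" "v \<in> Q - P" | "v \<in> P - Q" "u \<in> Q - P"
      by blast
    then show "h u \<noteq> h v"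
    proof cases
      case 1 then show ?thesis using gP uv unfolding colouring_on_def h_def by auto
    next
      case 2
      then have "gQ u \<noteq> gQ v" "gQ u < m" "gQ v < m" using gQ uv unfolding colouring_on_def by auto
      then show ?thesis using hQ 2 \<phi>(1) by (auto dest: inj_onD)
    next
      case 3 then show ?thesis using sep uv by blast
    next
      case 4 then show ?thesis using sep uv by (metis insert_commute)
    qed
  qed
qed

section \<open>Tight separations\<close>

lemma neighbourhood_component_separator:
  assumes eV: "\<forall>e\<in>edges G. e \<subseteq> verts G" and sep: "separation G A B" and y: "y \<in> B - A"
  shows "neighbourhood G (component G (B - A) y) \<subseteq> A \<inter> B"
proof
  fix s assume s: "s \<in> neighbourhood G (component G (B - A) y)"
  then obtain x where x: "x \<in> component G (B - A) y" "{x, s} \<in> edges G"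
    unfolding neighbourhood_def by blast
  have "x \<in> B - A" using x(1) component_subset[OF y] by blast
  have "s \<in> A \<union> B" using x(2) eV sep unfolding separation_def by blast
  moreover have "s \<notin> A - B"
    using sep \<open>x \<in> B - A\<close> x(2) unfolding separation_def by (metis insert_commute)
  moreover have "s \<notin> B - A" using s neighbourhood_component_disjoint[OF y] by blast
  ultimately show "s \<in> A \<inter> B" by blast
qed

text \<open>Shrinking a separation: D is a component of the B-side, S1 its neighbourhood,
  D' the component of G - D - S1 on the A-side and S the neighbourhood of D'.\<close>

lemma separation_tightening:
  assumes eV: "\<forall>e\<in>edges G. e \<subseteq> verts G" and sep: "separation G A B"
  obtains D D' S where
    "D \<subseteq> verts G" "D \<noteq> {}" "connected_set G D"
    "D' \<subseteq> verts G" "D' \<noteq> {}" "connected_set G D'"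
    "S \<subseteq> A \<inter> B" "D \<inter> D' = {}" "D \<inter> S = {}" "D' \<inter> S = {}"
    "\<forall>s\<in>S. \<exists>x\<in>D. {x, s} \<in> edges G" "\<forall>s\<in>S. \<exists>x\<in>D'. {x, s} \<in> edges G"
    "\<forall>x\<in>D'. \<forall>y. {x, y} \<in> edges G \<longrightarrow> y \<in> D' \<union> S"
proof -
  have AB: "A \<union> B = verts G" using sep unfolding separation_def by blast
  obtain x0 y0 where x0: "x0 \<in> A - B" and y0: "y0 \<in> B - A"
    using sep unfolding separation_def by blast
  define D where "D = component G (B - A) y0"
  define S1 where "S1 = neighbourhood G D"
  define U where "U = verts G - D - S1"
  define D' where "D' = component G U x0"
  define S where "S = neighbourhood G D'"
  have D_sub: "D \<subseteq> B - A" unfolding D_def using y0 by (rule component_subset)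
  have S1_sub: "S1 \<subseteq> A \<inter> B"
    unfolding S1_def D_def using eV sep y0 by (rule neighbourhood_component_separator)
  have x0U: "x0 \<in> U" using x0 AB D_sub S1_sub unfolding U_def by blast
  have D'_sub: "D' \<subseteq> U" unfolding D'_def using x0U by (rule component_subset)
  have "S \<subseteq> S1"
    using neighbourhood_component_outside_neighbourhood[OF eV x0U[unfolded U_def S1_def]]
    unfolding S_def D'_def U_def S1_def .
  show ?thesis
  proof (rule that)
    show "D \<subseteq> verts G" "D' \<subseteq> verts G" using D_sub D'_sub AB unfolding U_def by auto
    show "D \<noteq> {}" "D' \<noteq> {}" unfolding D_def D'_def using mem_component_self by fast+
    show "connected_set G D" "connected_set G D'"
      unfolding D_def D'_def by (rule connected_set_component)+
    show "S \<subseteq> A \<inter> B" using \<open>S \<subseteq> S1\<close> S1_sub by blast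
    show "D \<inter> D' = {}" "D \<inter> S = {}" "D' \<inter> S = {}"
      using D'_sub \<open>S \<subseteq> S1\<close> unfolding U_def S_def S1_def neighbourhood_def by auto
    show "\<forall>s\<in>S. \<exists>x\<in>D. {x, s} \<in> edges G"
      using \<open>S \<subseteq> S1\<close> unfolding S1_def neighbourhood_def by blast
    show "\<forall>s\<in>S. \<exists>x\<in>D'. {x, s} \<in> edges G" "\<forall>x\<in>D'. \<forall>y. {x, y} \<in> edges G \<longrightarrow> y \<in> D' \<union> S"
      unfolding S_def neighbourhood_def by blast+
  qed
qed

text \<open>Colour G - D' and G[D' \<union> S] by contracting D' resp. D; in both colourings the
  classes on S are the singletons of C \<inter> S together with I \<inter> S, so they glue.\<close>

lemma colourable_of_tight_split_separator:
  assumes fsg: "finite_simple_graph G"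
    and crit: "\<forall>H. proper_minor H G \<longrightarrow> chromatic_number H < k"
    and D: "D \<subseteq> verts G" "D \<noteq> {}" "connected_set G D"
    and D': "D' \<subseteq> verts G" "D' \<noteq> {}" "connected_set G D'"
    and disj: "D \<inter> D' = {}" "D \<inter> S = {}" "D' \<inter> S = {}"
    and attached: "\<forall>s\<in>S. \<exists>x\<in>D. {x, s} \<in> edges G" "\<forall>s\<in>S. \<exists>x\<in>D'. {x, s} \<in> edges G"
    and closed: "\<forall>x\<in>D'. \<forall>y. {x, y} \<in> edges G \<longrightarrow> y \<in> D' \<union> S"
    and split: "S \<subseteq> C \<union> I" "C \<inter> I = {}"
    and clique: "\<forall>u\<in>C. \<forall>v\<in>C. u \<noteq> v \<longrightarrow> {u, v} \<in> edges G"
    and indep: "\<forall>u\<in>I. \<forall>v\<in>I. {u, v} \<notin> edges G"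
  shows "colourable G (k - 1)"
proof -
  have eV: "\<forall>e\<in>edges G. e \<subseteq> verts G" using fsg by (simp add: finite_simple_graph_def)
  then have SV: "S \<subseteq> verts G" using attached(1) by fast
  define P where "P = verts G - D'"
  define Q where "Q = D' \<union> S"
  let ?C = "C \<inter> S" and ?I = "I \<inter> S"
  have S_parts: "?C \<union> ?I = S" "?C \<inter> ?I = {}" using split by auto
  have clique_S: "\<forall>u\<in>?C. \<forall>v\<in>?C. u \<noteq> v \<longrightarrow> {u, v} \<in> edges G" using clique by blast
  have indep_S: "\<forall>u\<in>?I. \<forall>v\<in>?I. {u, v} \<notin> edges G" using indep by blast
  have PQ: "P \<inter> Q = S" "P \<union> Q = verts G" using SV D'(1) disj(3) unfolding P_def Q_def by auto
  have "\<exists>g. colouring_on G P (k - 1) g \<and> colours_split ?C ?I g"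
  proof (rule split_colouring_beside_connected[OF fsg crit D' S_parts(2) indep_S])
    show "\<forall>s\<in>?C \<union> ?I. \<exists>x\<in>D'. {x, s} \<in> edges G" using attached(2) S_parts(1) by simp
    show "P \<subseteq> verts G" "P \<inter> D' = {}" "?C \<union> ?I \<subseteq> P"
      using PQ(1) unfolding P_def S_parts(1) by auto
  qed
  then obtain gP where gP: "colouring_on G P (k - 1) gP" "colours_split ?C ?I gP" by blast
  have "\<exists>g. colouring_on G Q (k - 1) g \<and> colours_split ?C ?I g"
  proof (rule split_colouring_beside_connected[OF fsg crit D S_parts(2) indep_S])
    show "\<forall>s\<in>?C \<union> ?I. \<exists>x\<in>D. {x, s} \<in> edges G" using attached(1) S_parts(1) by simp
    show "Q \<subseteq> verts G" "Q \<inter> D = {}" "?C \<union> ?I \<subseteq> Q"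
      using PQ disj(1,2) unfolding Q_def S_parts(1) by auto
  qed
  then obtain gQ where gQ: "colouring_on G Q (k - 1) gQ" "colours_split ?C ?I gQ" by blast
  have same: "\<forall>u\<in>P \<inter> Q. \<forall>v\<in>P \<inter> Q. gP u = gP v \<longleftrightarrow> gQ u = gQ v"
  proof (intro ballI)
    fix u v assume "u \<in> P \<inter> Q" "v \<in> P \<inter> Q"
    then have uv: "u \<in> ?C \<union> ?I" "v \<in> ?C \<union> ?I" using PQ(1) S_parts(1) by simp_all
    have "?C \<subseteq> P" "?C \<subseteq> Q" using PQ(1) by auto
    then show "gP u = gP v \<longleftrightarrow> gQ u = gQ v"
      using colours_split_same_colour_iff[OF gP(1) _ clique_S gP(2) uv]
        colours_split_same_colour_iff[OF gQ(1) _ clique_S gQ(2) uv] by simp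
  qed
  have sep: "\<forall>u v. u \<in> P - Q \<longrightarrow> v \<in> Q - P \<longrightarrow> {u, v} \<notin> edges G"
  proof (intro allI impI)
    fix u v assume "u \<in> P - Q" "v \<in> Q - P"
    then have "v \<in> D'" "u \<notin> D' \<union> S" using SV unfolding P_def Q_def by auto
    with closed show "{u, v} \<notin> edges G" by (metis insert_commute)
  qed
  show ?thesis by (rule colourable_glue[OF gP(1) gQ(1) PQ(2) eV sep same])
qed

lemma colourable_if_split_separator:
  assumes fsg: "finite_simple_graph G"
    and crit: "\<forall>H. proper_minor H G \<longrightarrow> chromatic_number H < k"
    and sep: "separation G A B"
    and split: "A \<inter> B \<subseteq> C \<union> I" "C \<inter> I = {}"
    and clique: "\<forall>u\<in>C. \<forall>v\<in>C. u \<noteq> v \<longrightarrow> {u, v} \<in> edges G"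
    and indep: "\<forall>u\<in>I. \<forall>v\<in>I. {u, v} \<notin> edges G"
  shows "colourable G (k - 1)"
proof -
  have "\<forall>e\<in>edges G. e \<subseteq> verts G" using fsg by (simp add: finite_simple_graph_def)
  then obtain D D' S where tight: "D \<subseteq> verts G" "D \<noteq> {}" "connected_set G D"
    "D' \<subseteq> verts G" "D' \<noteq> {}" "connected_set G D'"
    "S \<subseteq> A \<inter> B" "D \<inter> D' = {}" "D \<inter> S = {}" "D' \<inter> S = {}"
    "\<forall>s\<in>S. \<exists>x\<in>D. {x, s} \<in> edges G" "\<forall>s\<in>S. \<exists>x\<in>D'. {x, s} \<in> edges G"
    "\<forall>x\<in>D'. \<forall>y. {x, y} \<in> edges G \<longrightarrow> y \<in> D' \<union> S"
    using sep by (rule separation_tightening)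
  have "S \<subseteq> C \<union> I" using tight(7) split(1) by blast
  then show ?thesis
    by (rule colourable_of_tight_split_separator[OF fsg crit tight(1-6,8-13) _ split(2) clique indep])
qed

lemma split_graph_induced_subgraphE:
  assumes "split_graph (induced_subgraph G X)"
  obtains C I where "C \<union> I = X" "C \<inter> I = {}"
    "\<forall>u\<in>C. \<forall>v\<in>C. u \<noteq> v \<longrightarrow> {u, v} \<in> edges G" "\<forall>u\<in>I. \<forall>v\<in>I. {u, v} \<notin> edges G"
proof -
  have "verts (induced_subgraph G X) = X" by (simp add: induced_subgraph_def verts_def)
  with assms obtain C I where split: "C \<union> I = X" "C \<inter> I = {}"
    and clique: "\<forall>u\<in>C. \<forall>v\<in>C. u \<noteq> v \<longrightarrow> {u, v} \<in> edges (induced_subgraph G X)"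
    and indep: "\<forall>u\<in>I. \<forall>v\<in>I. {u, v} \<notin> edges (induced_subgraph G X)"
    unfolding split_graph_def by metis
  have induced_edge: "{u, v} \<in> edges (induced_subgraph G X) \<longleftrightarrow> {u, v} \<in> edges G"
    if "u \<in> X" "v \<in> X" for u v
    using that by (simp add: induced_subgraph_def edges_def)
  show ?thesis
  proof (rule that[OF split])
    show "\<forall>u\<in>C. \<forall>v\<in>C. u \<noteq> v \<longrightarrow> {u, v} \<in> edges G" "\<forall>u\<in>I. \<forall>v\<in>I. {u, v} \<notin> edges G"
      using clique indep induced_edge split(1) by (metis UnCI)+
  qed
qed

theorem mainTheorem12:
  fixes G :: "'a graph" and k :: nat
  assumes "finite_simple_graph G"
    and "minor_critical k G"
    and "separation G A B"
  shows "\<not> split_graph (induced_subgraph G (A \<inter> B))"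
proof
  assume "split_graph (induced_subgraph G (A \<inter> B))"
  then obtain C I where split: "C \<union> I = A \<inter> B" "C \<inter> I = {}"
    and clique: "\<forall>u\<in>C. \<forall>v\<in>C. u \<noteq> v \<longrightarrow> {u, v} \<in> edges G"
    and indep: "\<forall>u\<in>I. \<forall>v\<in>I. {u, v} \<notin> edges G"
    by (rule split_graph_induced_subgraphE)
  have chi: "chromatic_number G = k" and crit: "\<forall>H. proper_minor H G \<longrightarrow> chromatic_number H < k"
    using assms(2) unfolding minor_critical_def by auto
  have "colourable G (k - 1)"
    using colourable_if_split_separator[OF assms(1) crit assms(3) _ split(2) clique indep] split(1)
    by blast
  moreover have "k = 0"
    using chromatic_number_le[OF \<open>colourable G (k - 1)\<close>] chi by linarith
  moreover have "verts G \<noteq> {}" using assms(3) unfolding separation_def by blast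
  ultimately show False by (simp add: not_colourable_zero)
qed

end
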